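(* Let $n\geq 1$ and $m\geq 0$ be integers and let $Y_{n,m}$ be the Yoke graph. Then: If $m\leq n$, then $\operatorname{diam}(Y_{n,m})=\lfloor\frac{n(m+1)}{2}\rfloor$. If $1=n\leq m$, then $\operatorname{diam}(Y_{n,m})=\binom{\lceil m/2\rceil+1}{2}+\binom{\lfloor m/2\rfloor+1}{2}$. Otherwise $1<n\leq m$, and: (1) if $2\mid (m-n)$ or $n\leq \lceil\frac{m+1}{2}\rceil$, then $\operatorname{diam}(Y_{n,m})=\binom{\lfloor\frac{m+n}{2}\rfloor+1}{2}+\binom{\lceil\frac{m-n}{2}\rceil+1}{2}$; (2) otherwise, $\operatorname{diam}(Y_{n,m})=\binom{\lfloor\frac{m+n}{2}\rfloor+1}{2}+\binom{\lceil\frac{m-n}{2}\rceil+1}{2}+n-\lceil\frac{m+1}{2}\rceil$.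
   Context: Elements of $\mathbb{Z}_n$ are identified with their smallest non-negative representatives $\{0,\dots,n-1\}$. For integers $n\geq1$, $m\geq0$, the Yoke graph $Y_{n,m}$ has as vertices all $u=(u_0,\dots,u_{m+1})\in\mathbb{Z}_n\times\{0,1\}^m\times\mathbb{Z}_n$ with $\sum_{i=0}^{m+1}u_i\equiv 0 \pmod n$. Two vertices $u,v$ are adjacent if there is $0\leq i\leq m$ such that $u_j=v_j$ for all $j\notin\{i,i+1\}$ and either ($u_i=v_i+1$ and $u_{i+1}=v_{i+1}-1$) or ($u_i=v_i-1$ and $u_{i+1}=v_{i+1}+1$), where arithmetic in the coordinates $0$ and $m+1$ is in $\mathbb{Z}_n$ and in the other coordinates is in $\mathbb{Z}$ (so they must stay in $\{0,1\}$). *)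

theory Defs
  imports Main "HOL-Library.Extended_Nat" "HOL-Number_Theory.Cong"
begin

text \<open>Vertices of the Yoke graph Y_{n,m}: lists u = [u_0,...,u_{m+1}] of naturals with
  u_0, u_{m+1} in {0..n-1} (representatives of Z_n), u_1..u_m in {0,1},
  and sum congruent to 0 mod n.\<close>
definition yoke_vert :: "nat \<Rightarrow> nat \<Rightarrow> nat list \<Rightarrow> bool" where
  "yoke_vert n m u \<longleftrightarrow> length u = m + 2 \<and> u ! 0 < n \<and> u ! (m + 1) < n
     \<and> (\<forall>j. 1 \<le> j \<and> j \<le> m \<longrightarrow> u ! j \<le> 1) \<and> sum_list u mod n = 0"

definition yoke_succ :: "nat \<Rightarrow> nat \<Rightarrow> nat \<Rightarrow> nat \<Rightarrow> nat \<Rightarrow> bool" where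
  "yoke_succ n m k a b \<longleftrightarrow> (if k = 0 \<or> k = m + 1 then [a = b + 1] (mod n) else a = b + 1)"

definition yoke_adj :: "nat \<Rightarrow> nat \<Rightarrow> nat list \<Rightarrow> nat list \<Rightarrow> bool" where
  "yoke_adj n m u v \<longleftrightarrow> yoke_vert n m u \<and> yoke_vert n m v \<and>
     (\<exists>i\<le>m. (\<forall>j<m + 2. j \<noteq> i \<and> j \<noteq> i + 1 \<longrightarrow> u ! j = v ! j) \<and>
        ((yoke_succ n m i (u ! i) (v ! i) \<and> yoke_succ n m (i + 1) (v ! (i + 1)) (u ! (i + 1))) \<or>
         (yoke_succ n m i (v ! i) (u ! i) \<and> yoke_succ n m (i + 1) (u ! (i + 1)) (v ! (i + 1)))))"

text \<open>Graph distance (infinite if no walk exists) and diameter.\<close>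
definition yoke_dist :: "nat \<Rightarrow> nat \<Rightarrow> nat list \<Rightarrow> nat list \<Rightarrow> enat" where
  "yoke_dist n m u v = (INF k \<in> {k. (yoke_adj n m ^^ k) u v}. enat k)"

definition yoke_diam :: "nat \<Rightarrow> nat \<Rightarrow> enat" where
  "yoke_diam n m = (SUP u \<in> {u. yoke_vert n m u}. SUP v \<in> {v. yoke_vert n m v}. yoke_dist n m u v)"

end

theory Submission
  imports Defs
begin

text \<open>A vertex \<open>u\<close> is encoded by its prefix sums \<open>s j = u 0 + \<dots> + u j\<close> (\<open>j \<le> m\<close>), a staircase
  with steps \<open>0\<close> or \<open>1\<close> that is determined up to a common multiple of \<open>n\<close>. An edge changes a
  single prefix sum by one, so the distance of \<open>u\<close> and \<open>v\<close> is the least value of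
  \<open>\<Sum>j. \<bar>s j - t j - c n\<bar>\<close> over integers \<open>c\<close>: this potential bounds every walk from below, and a
  greedy walk attains it. The difference \<open>d = s - t\<close> moves by at most one per step.
  For the upper bound take \<open>c\<close> where the number of indices with \<open>d j < c n\<close> crosses \<open>m / 2\<close>;
  since \<open>d\<close> passes through every intermediate level, the mass on either side of a level is at
  most a triangular number. For the lower bound compare \<open>t = 0\<close> with a line centred between
  two multiples of \<open>n\<close>, flattened at its middle step when \<open>m - n\<close> is odd.\<close>

section \<open>Vertices as staircases\<close>

definition prefix_sum :: "nat list \<Rightarrow> nat \<Rightarrow> int" where
  "prefix_sum u j = (\<Sum>l\<le>j. int (u ! l))"

lemma prefix_sum_0: "prefix_sum u 0 = int (u ! 0)"
  by (simp add: prefix_sum_def)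

lemma prefix_sum_Suc: "prefix_sum u (Suc j) = prefix_sum u j + int (u ! Suc j)"
  by (simp add: prefix_sum_def)

definition staircase :: "nat \<Rightarrow> (nat \<Rightarrow> int) \<Rightarrow> bool" where
  "staircase m s \<longleftrightarrow> (\<forall>j<m. 0 \<le> s (Suc j) - s j \<and> s (Suc j) - s j \<le> 1)"

text \<open>The inverse of \<open>prefix_sum\<close> up to a multiple of \<open>n\<close>: the end coordinates are reduced
  modulo \<open>n\<close>, and the last one is forced by the condition that the total sum vanish modulo \<open>n\<close>.\<close>

definition stair_coord :: "nat \<Rightarrow> nat \<Rightarrow> (nat \<Rightarrow> int) \<Rightarrow> nat \<Rightarrow> nat" where
  "stair_coord n m s j =
    (if j = 0 then nat (s 0 mod int n)
     else if j = m + 1 then nat ((- s m) mod int n)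
     else nat (s j - s (j - 1)))"

definition stair_vertex :: "nat \<Rightarrow> nat \<Rightarrow> (nat \<Rightarrow> int) \<Rightarrow> nat list" where
  "stair_vertex n m s = map (stair_coord n m s) [0..<m + 2]"

lemma length_stair_vertex [simp]: "length (stair_vertex n m s) = m + 2"
  by (simp add: stair_vertex_def)

lemma nth_stair_vertex: "j < m + 2 \<Longrightarrow> stair_vertex n m s ! j = stair_coord n m s j"
  by (simp add: stair_vertex_def del: upt_Suc)

lemma staircase_step:
  assumes "staircase m s" "0 < j" "j \<le> m"
  shows "0 \<le> s j - s (j - 1)" "s j - s (j - 1) \<le> 1"
  using assms unfolding staircase_def by (metis Suc_pred' Suc_le_lessD)+

lemma yoke_vert_stair_vertex:
  assumes "1 \<le> n" "staircase m s"
  shows "yoke_vert n m (stair_vertex n m s)"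
proof -
  have mid: "int (stair_coord n m s (Suc j)) = s (Suc j) - s j" if "j < m" for j
    using assms(2) that unfolding staircase_def stair_coord_def by auto
  have "int (sum_list (stair_vertex n m s)) = (\<Sum>j<m + 2. int (stair_coord n m s j))"
    by (simp add: stair_vertex_def interv_sum_list_conv_sum_set_nat atLeast0LessThan del: upt_Suc)
  also have "\<dots> = (\<Sum>j<Suc m. int (stair_coord n m s j)) + int (stair_coord n m s (m + 1))"
    by simp
  also have "(\<Sum>j<Suc m. int (stair_coord n m s j))
      = int (stair_coord n m s 0) + (\<Sum>j<m. int (stair_coord n m s (Suc j)))"
    by (rule sum.lessThan_Suc_shift)
  also have "(\<Sum>j<m. int (stair_coord n m s (Suc j))) = s m - s 0"
    by (simp add: mid sum_lessThan_telescope)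
  finally have "int (sum_list (stair_vertex n m s)) = s 0 mod int n + (s m - s 0) + (- s m) mod int n"
    using assms(1) by (simp add: stair_coord_def)
  also have "\<dots> = int n * (- (s 0 div int n) - (- s m) div int n)"
    by (simp add: algebra_simps minus_div_mult_eq_mod[symmetric])
  finally have "int (sum_list (stair_vertex n m s)) mod int n = 0" by simp
  then have "sum_list (stair_vertex n m s) mod n = 0"
    by (metis of_nat_0 of_nat_eq_iff zmod_int)
  moreover have "stair_vertex n m s ! j \<le> 1" if "1 \<le> j" "j \<le> m" for j
    using staircase_step[OF assms(2), of j] that by (simp add: nth_stair_vertex stair_coord_def)
  ultimately show ?thesis
    using assms(1) by (simp add: yoke_vert_def nth_stair_vertex stair_coord_def nat_less_iff)
qed

lemma prefix_sum_stair_vertex: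
  assumes "1 \<le> n" "staircase m s" "j \<le> m"
  shows "prefix_sum (stair_vertex n m s) j = s j - (s 0 div int n) * int n"
  using assms(3)
proof (induction j)
  case 0
  then show ?case using assms(1)
    by (simp add: prefix_sum_0 nth_stair_vertex stair_coord_def minus_div_mult_eq_mod)
next
  case (Suc j)
  then have "int (stair_vertex n m s ! Suc j) = s (Suc j) - s j"
    using assms(2) unfolding staircase_def by (simp add: nth_stair_vertex stair_coord_def)
  then show ?case using Suc by (simp add: prefix_sum_Suc)
qed

lemma staircase_prefix_sum: "yoke_vert n m u \<Longrightarrow> staircase m (prefix_sum u)"
  unfolding staircase_def yoke_vert_def by (auto simp: prefix_sum_Suc)

lemma stair_vertex_prefix_sum:
  assumes "yoke_vert n m u"
  shows "stair_vertex n m (prefix_sum u) = u"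
proof (rule nth_equalityI)
  have len: "length u = m + 2" using assms by (simp add: yoke_vert_def)
  then show "length (stair_vertex n m (prefix_sum u)) = length u" by simp
  fix j assume "j < length (stair_vertex n m (prefix_sum u))"
  then consider "j = 0" | "j = m + 1" | "0 < j" "j \<le> m" by fastforce
  then show "stair_vertex n m (prefix_sum u) ! j = u ! j"
  proof cases
    case 1
    then show ?thesis using assms
      by (simp add: yoke_vert_def nth_stair_vertex stair_coord_def prefix_sum_0 zmod_int[symmetric])
  next
    case 2
    have "int (sum_list u) = (\<Sum>l<m + 2. int (u ! l))"
      by (simp add: sum_list_sum_nth len atLeast0LessThan)
    also have "\<dots> = prefix_sum u m + int (u ! (m + 1))"
      by (simp add: prefix_sum_def lessThan_Suc_atMost)
    finally have "int (u ! (m + 1)) = - prefix_sum u m + int (sum_list u)" by simp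
    moreover have "int (sum_list u) mod int n = 0"
      using assms by (metis yoke_vert_def of_nat_0 zmod_int)
    then obtain q where "int (sum_list u) = q * int n" by (metis dvd_def mod_0_imp_dvd mult.commute)
    ultimately have "- prefix_sum u m = int (u ! (m + 1)) + (- q) * int n" by linarith
    then have "(- prefix_sum u m) mod int n = int (u ! (m + 1)) mod int n"
      by (simp only: mod_mult_self1)
    then show ?thesis using 2 assms by (simp add: yoke_vert_def nth_stair_vertex stair_coord_def)
  next
    case 3
    then obtain i where "j = Suc i" by (cases j) auto
    then show ?thesis using 3 by (simp add: nth_stair_vertex stair_coord_def prefix_sum_Suc)
  qed
qed

lemma stair_vertex_shift:
  assumes "\<forall>j\<le>m. t j = s j + c * int n"
  shows "stair_vertex n m t = stair_vertex n m s"
  unfolding stair_vertex_def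
proof (rule map_cong[OF refl])
  fix j assume "j \<in> set [0..<m + 2]"
  have "t 0 = s 0 + c * int n" "- t m = - s m + (- c) * int n" using assms by simp_all
  then have "t 0 mod int n = s 0 mod int n" "(- t m) mod int n = (- s m) mod int n"
    by (simp_all only: mod_mult_self1)
  moreover have "t j - t (j - 1) = s j - s (j - 1)" if "0 < j" "j \<le> m"
    using assms that by simp
  ultimately show "stair_coord n m t j = stair_coord n m s j"
    using \<open>j \<in> set [0..<m + 2]\<close> by (auto simp: stair_coord_def)
qed

lemma cong_nat_mod_Suc:
  assumes "1 \<le> n"
  shows "[nat ((x + 1) mod int n) = nat (x mod int n) + 1] (mod n)"
proof -
  have "(x + 1) mod int n = (1 + x mod int n) mod int n"
    by (metis add.commute mod_add_right_eq)
  then have "int (nat ((x + 1) mod int n)) mod int n = int (nat (x mod int n) + 1) mod int n"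
    using assms by simp
  then show ?thesis unfolding cong_def by (metis of_nat_eq_iff zmod_int)
qed

text \<open>Raising the prefix sum at \<open>i\<close> raises coordinate \<open>i\<close> and lowers coordinate \<open>i + 1\<close>.\<close>

lemma yoke_adj_stair_vertex_raise:
  assumes "1 \<le> n" "staircase m s" "staircase m (s(i := s i + 1))" "i \<le> m"
  shows "yoke_adj n m (stair_vertex n m s) (stair_vertex n m (s(i := s i + 1)))"
proof -
  let ?s' = "s(i := s i + 1)"
  have same: "stair_vertex n m s ! j = stair_vertex n m ?s' ! j"
    if "j < m + 2" "j \<noteq> i" "j \<noteq> i + 1" for j
    using that by (cases "j = 0") (auto simp: nth_stair_vertex stair_coord_def)
  have raise: "yoke_succ n m i (stair_vertex n m ?s' ! i) (stair_vertex n m s ! i)"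
  proof (cases "i = 0")
    case True
    then show ?thesis using cong_nat_mod_Suc[OF assms(1), of "s 0"]
      by (simp add: yoke_succ_def nth_stair_vertex stair_coord_def)
  next
    case False
    then have "0 \<le> s i - s (i - 1)" using staircase_step[OF assms(2)] assms(4) by simp
    then have "nat (s i + 1 - s (i - 1)) = nat (s i - s (i - 1)) + 1" by simp
    then show ?thesis using False assms(4)
      by (simp add: yoke_succ_def nth_stair_vertex stair_coord_def)
  qed
  have lower: "yoke_succ n m (i + 1) (stair_vertex n m s ! (i + 1)) (stair_vertex n m ?s' ! (i + 1))"
  proof (cases "i = m")
    case True
    have "- (s m + 1) + 1 = - s m" by simp
    then show ?thesis using True cong_nat_mod_Suc[OF assms(1), of "- (s m + 1)"]
      by (simp add: yoke_succ_def nth_stair_vertex stair_coord_def)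
  next
    case False
    then have "i < m" using assms(4) by simp
    then have "0 \<le> (s(i := s i + 1)) (Suc i) - (s(i := s i + 1)) i"
      using assms(3) unfolding staircase_def by blast
    then have "0 \<le> s (Suc i) - s i - 1" by simp
    then show ?thesis using False assms(4)
      by (simp add: yoke_succ_def nth_stair_vertex stair_coord_def nat_add_distrib[symmetric] algebra_simps)
  qed
  show ?thesis unfolding yoke_adj_def
    using yoke_vert_stair_vertex[OF assms(1,2)] yoke_vert_stair_vertex[OF assms(1,3)] same raise lower assms(4)
    by blast
qed

lemma yoke_adj_sym: "yoke_adj n m u v \<Longrightarrow> yoke_adj n m v u"
  unfolding yoke_adj_def by (metis (no_types, lifting))

lemma yoke_adj_relpowp_sym: "(yoke_adj n m ^^ k) u v \<Longrightarrow> (yoke_adj n m ^^ k) v u"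
proof (induction k arbitrary: v)
  case 0
  then show ?case by simp
next
  case (Suc k)
  then obtain w where "(yoke_adj n m ^^ k) u w" "yoke_adj n m w v" by (elim relpowp_Suc_E)
  then show ?case using Suc.IH yoke_adj_sym by (metis relpowp_Suc_I2)
qed

lemma yoke_succ_int:
  assumes "yoke_succ n m k a b"
  obtains c where "int a = int b + 1 + c * int n" "1 \<le> k \<and> k \<le> m \<Longrightarrow> c = 0"
proof (cases "k = 0 \<or> k = m + 1")
  case True
  then have "[a = b + 1] (mod n)" using assms by (simp add: yoke_succ_def)
  then have "[int a = int (b + 1)] (mod int n)" by (simp only: cong_int_iff)
  then obtain c where "int a - int (b + 1) = int n * c"
    by (metis cong_iff_dvd_diff cong_sym_eq dvdE)
  then show ?thesis using True by (intro that[of c]) (auto simp: algebra_simps)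
next
  case False
  then show ?thesis using assms that[of 0] by (simp add: yoke_succ_def)
qed

text \<open>The multiple of \<open>n\<close> comes from a wrap-around in coordinate \<open>0\<close>; coordinate \<open>m + 1\<close>
  does not enter the prefix sums up to \<open>m\<close>.\<close>

lemma prefix_sum_yoke_adj:
  assumes "yoke_adj n m w' w"
  shows "\<exists>i c \<delta>. \<bar>\<delta>\<bar> \<le> 1
    \<and> (\<forall>j\<le>m. prefix_sum w j = prefix_sum w' j + (if j = i then \<delta> else 0) + c * int n)"
proof -
  obtain i where i: "i \<le> m"
    and same: "\<forall>j<m + 2. j \<noteq> i \<and> j \<noteq> i + 1 \<longrightarrow> w' ! j = w ! j"
    and moves: "(yoke_succ n m i (w' ! i) (w ! i) \<and> yoke_succ n m (i + 1) (w ! (i + 1)) (w' ! (i + 1))) \<or>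
         (yoke_succ n m i (w ! i) (w' ! i) \<and> yoke_succ n m (i + 1) (w' ! (i + 1)) (w ! (i + 1)))"
    using assms unfolding yoke_adj_def by blast
  define e where "e l = int (w ! l) - int (w' ! l)" for l
  obtain \<delta> c where \<delta>: "\<bar>\<delta>\<bar> \<le> 1" and ei: "e i = \<delta> + c * int n" and c: "0 < i \<Longrightarrow> c = 0"
    and ei1: "i + 1 \<le> m \<Longrightarrow> e (i + 1) = - \<delta>"
    using moves
  proof
    assume h: "yoke_succ n m i (w' ! i) (w ! i) \<and> yoke_succ n m (i + 1) (w ! (i + 1)) (w' ! (i + 1))"
    obtain c where "int (w' ! i) = int (w ! i) + 1 + c * int n" "1 \<le> i \<and> i \<le> m \<Longrightarrow> c = 0"
      using yoke_succ_int[OF conjunct1[OF h]] by blast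
    moreover have "i + 1 \<le> m \<Longrightarrow> e (i + 1) = 1" using h by (simp add: yoke_succ_def e_def)
    ultimately show thesis using that[of "-1" "- c"] i by (simp add: e_def algebra_simps)
  next
    assume h: "yoke_succ n m i (w ! i) (w' ! i) \<and> yoke_succ n m (i + 1) (w' ! (i + 1)) (w ! (i + 1))"
    obtain c where "int (w ! i) = int (w' ! i) + 1 + c * int n" "1 \<le> i \<and> i \<le> m \<Longrightarrow> c = 0"
      using yoke_succ_int[OF conjunct1[OF h]] by blast
    moreover have "i + 1 \<le> m \<Longrightarrow> e (i + 1) = -1" using h by (simp add: yoke_succ_def e_def)
    ultimately show thesis using that[of 1 c] i by (simp add: e_def algebra_simps)
  qed
  have "prefix_sum w j = prefix_sum w' j + (if j = i then \<delta> else 0) + c * int n" if "j \<le> m" for j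
  proof -
    have "prefix_sum w j - prefix_sum w' j = (\<Sum>l\<le>j. e l)"
      by (simp add: prefix_sum_def e_def sum_subtractf)
    also have "\<dots> = (\<Sum>l\<le>j. (if l = i then e i else 0) + (if l = i + 1 then e (i + 1) else 0))"
      by (rule sum.cong) (use that same in \<open>auto simp: e_def\<close>)
    also have "\<dots> = (if i \<le> j then e i else 0) + (if i + 1 \<le> j then e (i + 1) else 0)"
      by (simp add: sum.distrib)
    also have "\<dots> = (if j = i then \<delta> else 0) + c * int n"
      using ei ei1 c that by auto
    finally show ?thesis by simp
  qed
  then show ?thesis using \<delta> by blast
qed

section \<open>Distances\<close>

definition stair_dist :: "nat \<Rightarrow> (nat \<Rightarrow> int) \<Rightarrow> (nat \<Rightarrow> int) \<Rightarrow> int" where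
  "stair_dist m s t = (\<Sum>j\<le>m. \<bar>s j - t j\<bar>)"

lemma stair_dist_commute: "stair_dist m s t = stair_dist m t s"
  unfolding stair_dist_def by (simp add: abs_minus_commute)

lemma stair_dist_nonneg: "0 \<le> stair_dist m s t"
  unfolding stair_dist_def by (simp add: sum_nonneg)

lemma stair_dist_eq_0_iff: "stair_dist m s t = 0 \<longleftrightarrow> (\<forall>j\<le>m. s j = t j)"
  unfolding stair_dist_def by (subst sum_nonneg_eq_0_iff) auto

lemma sum_atMost_fun_upd:
  fixes f :: "nat \<Rightarrow> int"
  assumes "i \<le> m"
  shows "(\<Sum>j\<le>m. (f(i := x)) j) = (\<Sum>j\<le>m. f j) - f i + x"
proof -
  have "(\<Sum>j\<le>m. (f(i := x)) j) = x + (\<Sum>j\<in>{..m} - {i}. (f(i := x)) j)"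
    using sum.remove[of "{..m}" i "f(i := x)"] assms by simp
  also have "(\<Sum>j\<in>{..m} - {i}. (f(i := x)) j) = (\<Sum>j\<in>{..m} - {i}. f j)" by (rule sum.cong) auto
  also have "\<dots> = (\<Sum>j\<le>m. f j) - f i" using sum.remove[of "{..m}" i f] assms by simp
  finally show ?thesis by simp
qed

lemma stair_dist_lower:
  assumes "i \<le> m" "t i < s i"
  shows "stair_dist m (s(i := s i - 1)) t + 1 = stair_dist m s t"
proof -
  have e: "(\<lambda>j. \<bar>(s(i := s i - 1)) j - t j\<bar>) = (\<lambda>j. \<bar>s j - t j\<bar>)(i := \<bar>s i - 1 - t i\<bar>)"
    by auto
  show ?thesis unfolding stair_dist_def e sum_atMost_fun_upd[OF assms(1)] using assms(2) by simp
qed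

lemma stair_dist_raise:
  assumes "i \<le> m" "t i < s i"
  shows "stair_dist m s (t(i := t i + 1)) + 1 = stair_dist m s t"
proof -
  have e: "(\<lambda>j. \<bar>s j - (t(i := t i + 1)) j\<bar>) = (\<lambda>j. \<bar>s j - t j\<bar>)(i := \<bar>s i - (t i + 1)\<bar>)"
    by auto
  show ?thesis unfolding stair_dist_def e sum_atMost_fun_upd[OF assms(1)] using assms(2) by simp
qed

lemma staircase_lower:
  assumes "staircase m s" "i < m \<Longrightarrow> s (Suc i) = s i" "0 < i \<Longrightarrow> s i = s (i - 1) + 1"
  shows "staircase m (s(i := s i - 1))"
  unfolding staircase_def
proof (intro allI impI)
  fix j assume "j < m"
  then show "0 \<le> (s(i := s i - 1)) (Suc j) - (s(i := s i - 1)) j \<and> (s(i := s i - 1)) (Suc j) - (s(i := s i - 1)) j \<le> 1"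
    using assms by (cases "j = i"; cases "Suc j = i") (auto simp: staircase_def)
qed

lemma staircase_raise:
  assumes "staircase m t" "i < m \<Longrightarrow> t (Suc i) = t i + 1" "0 < i \<Longrightarrow> t i = t (i - 1)"
  shows "staircase m (t(i := t i + 1))"
  unfolding staircase_def
proof (intro allI impI)
  fix j assume "j < m"
  then show "0 \<le> (t(i := t i + 1)) (Suc j) - (t(i := t i + 1)) j \<and> (t(i := t i + 1)) (Suc j) - (t(i := t i + 1)) j \<le> 1"
    using assms by (cases "j = i"; cases "Suc j = i") (auto simp: staircase_def)
qed

text \<open>At the last position \<open>i\<close> where \<open>s - t\<close> is maximal, either \<open>s\<close> can be lowered or \<open>t\<close>
  raised at \<open>i\<close> without leaving the staircases.\<close>

lemma staircase_last_max_gap: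
  assumes "staircase m s" "staircase m t" "\<exists>j\<le>m. t j < s j"
  shows "\<exists>i\<le>m. t i < s i \<and> (i < m \<longrightarrow> s (Suc i) = s i \<and> t (Suc i) = t i + 1)
    \<and> (0 < i \<longrightarrow> s i = s (i - 1) + 1 \<or> t i = t (i - 1))"
proof -
  define d where "d j = s j - t j" for j
  define M where "M = Max (d ` {..m})"
  have d_le: "d j \<le> M" if "j \<le> m" for j unfolding M_def using that by auto
  define i where "i = Max {j. j \<le> m \<and> d j = M}"
  have "M \<in> d ` {..m}" unfolding M_def by (rule Max_in) auto
  then have "i \<in> {j. j \<le> m \<and> d j = M}" unfolding i_def by (intro Max_in) auto
  then have i: "i \<le> m" "d i = M" by auto
  have after_i: "d j < M" if "i < j" "j \<le> m" for j
  proof (rule ccontr)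
    assume "\<not> d j < M"
    then have "j \<le> i" unfolding i_def using d_le[OF that(2)] that(2) by (intro Max_ge) auto
    then show False using that(1) by simp
  qed
  have "t i < s i" using assms(3) d_le i unfolding d_def by force
  moreover have "s (Suc i) = s i \<and> t (Suc i) = t i + 1" if "i < m"
  proof -
    have "d (Suc i) < d i" using after_i[of "Suc i"] i that by simp
    moreover have "0 \<le> s (Suc i) - s i" "s (Suc i) - s i \<le> 1" "0 \<le> t (Suc i) - t i" "t (Suc i) - t i \<le> 1"
      using assms(1,2) that unfolding staircase_def by auto
    ultimately show ?thesis unfolding d_def by linarith
  qed
  moreover have "s i = s (i - 1) + 1 \<or> t i = t (i - 1)" if "0 < i"
  proof -
    have "d (i - 1) \<le> d i" using d_le[of "i - 1"] i by simp
    moreover note staircase_step[OF assms(1) that i(1)] staircase_step[OF assms(2) that i(1)]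
    ultimately show ?thesis unfolding d_def by linarith
  qed
  ultimately show ?thesis using i(1) by blast
qed

lemma staircase_step_closer:
  assumes "1 \<le> n" "staircase m s" "staircase m t" "\<exists>j\<le>m. t j < s j"
  shows "\<exists>s' t'. staircase m s' \<and> staircase m t' \<and> stair_dist m s' t' + 1 = stair_dist m s t
    \<and> (\<forall>k. (yoke_adj n m ^^ k) (stair_vertex n m s') (stair_vertex n m t')
           \<longrightarrow> (yoke_adj n m ^^ Suc k) (stair_vertex n m s) (stair_vertex n m t))"
proof -
  obtain i where i: "i \<le> m" "t i < s i" and flat: "i < m \<longrightarrow> s (Suc i) = s i \<and> t (Suc i) = t i + 1"
    and before: "0 < i \<longrightarrow> s i = s (i - 1) + 1 \<or> t i = t (i - 1)"
    using staircase_last_max_gap[OF assms(2-4)] by blast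
  show ?thesis
  proof (cases "i = 0 \<or> s i = s (i - 1) + 1")
    case True
    define s' where "s' = s(i := s i - 1)"
    have s': "staircase m s'" unfolding s'_def using True flat by (intro staircase_lower[OF assms(2)]) auto
    have "s'(i := s' i + 1) = s" by (simp add: s'_def)
    then have "yoke_adj n m (stair_vertex n m s) (stair_vertex n m s')"
      using yoke_adj_stair_vertex_raise[OF assms(1) s' _ i(1)] assms(2) yoke_adj_sym by metis
    then have "(yoke_adj n m ^^ Suc k) (stair_vertex n m s) (stair_vertex n m t)"
      if "(yoke_adj n m ^^ k) (stair_vertex n m s') (stair_vertex n m t)" for k
      using that by (rule relpowp_Suc_I2)
    then show ?thesis
      using s' assms(3) stair_dist_lower[where s=s and t=t, OF i] unfolding s'_def by blast
  next
    case False
    define t' where "t' = t(i := t i + 1)"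
    have t': "staircase m t'" unfolding t'_def using False flat before by (intro staircase_raise[OF assms(3)]) auto
    have adj: "yoke_adj n m (stair_vertex n m t') (stair_vertex n m t)"
      using yoke_adj_stair_vertex_raise[OF assms(1,3) t' [unfolded t'_def] i(1)] yoke_adj_sym
      unfolding t'_def by blast
    have "(yoke_adj n m ^^ Suc k) (stair_vertex n m s) (stair_vertex n m t)"
      if "(yoke_adj n m ^^ k) (stair_vertex n m s) (stair_vertex n m t')" for k
      by (rule relpowp_Suc_I[OF that adj])
    then show ?thesis
      using assms(2) t' stair_dist_raise[where s=s and t=t, OF i] unfolding t'_def by blast
  qed
qed

lemma yoke_walk_stair_dist:
  assumes "1 \<le> n" "staircase m s" "staircase m t"
  shows "(yoke_adj n m ^^ nat (stair_dist m s t)) (stair_vertex n m s) (stair_vertex n m t)"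
proof -
  have walk: "(yoke_adj n m ^^ D) (stair_vertex n m s) (stair_vertex n m t)"
    if "staircase m s" "staircase m t" "stair_dist m s t = int D" for D s t
    using that
  proof (induction D arbitrary: s t)
    case 0
    then have "\<forall>j\<le>m. t j = s j + 0 * int n" by (simp add: stair_dist_eq_0_iff)
    then have "stair_vertex n m t = stair_vertex n m s" by (rule stair_vertex_shift)
    then show ?case by simp
  next
    case (Suc D)
    have closer: "(yoke_adj n m ^^ Suc D) (stair_vertex n m s) (stair_vertex n m t)"
      if stairs: "staircase m s" "staircase m t" and dist: "stair_dist m s t = int (Suc D)"
        and gap: "\<exists>j\<le>m. t j < s j" for s t
    proof -
      obtain s' t' where s't': "staircase m s'" "staircase m t'" "stair_dist m s' t' + 1 = stair_dist m s t"
        and step: "\<forall>k. (yoke_adj n m ^^ k) (stair_vertex n m s') (stair_vertex n m t')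
           \<longrightarrow> (yoke_adj n m ^^ Suc k) (stair_vertex n m s) (stair_vertex n m t)"
        using staircase_step_closer[OF assms(1) stairs gap] by blast
      have "stair_dist m s' t' = int D" using s't'(3) dist by simp
      with s't'(1,2) have "(yoke_adj n m ^^ D) (stair_vertex n m s') (stair_vertex n m t')"
        by (rule Suc.IH)
      then show ?thesis using step by blast
    qed
    have "stair_dist m s t \<noteq> 0" using Suc.prems(3) by simp
    then have "\<not> (\<forall>j\<le>m. s j = t j)" by (simp add: stair_dist_eq_0_iff)
    then consider "\<exists>j\<le>m. t j < s j" | "\<exists>j\<le>m. s j < t j" by (meson linorder_neqE)
    then show ?case
    proof cases
      case 1
      with Suc.prems show ?thesis by (rule closer)
    next
      case 2
      have "stair_dist m t s = int (Suc D)" using Suc.prems(3) by (simp add: stair_dist_commute)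
      with Suc.prems(2,1) have "(yoke_adj n m ^^ Suc D) (stair_vertex n m t) (stair_vertex n m s)"
        using 2 by (rule closer)
      then show ?thesis by (rule yoke_adj_relpowp_sym)
    qed
  qed
  show ?thesis by (rule walk[OF assms(2,3)]) (simp add: stair_dist_nonneg)
qed

lemma yoke_walk_prefix_sum_bound:
  assumes "(yoke_adj n m ^^ k) u w"
  shows "\<exists>c. (\<Sum>j\<le>m. \<bar>prefix_sum u j - prefix_sum w j - c * int n\<bar>) \<le> int k"
  using assms
proof (induction k arbitrary: w)
  case 0
  then show ?case by (intro exI[of _ 0]) simp
next
  case (Suc k)
  then obtain y where y: "(yoke_adj n m ^^ k) u y" "yoke_adj n m y w" by (elim relpowp_Suc_E)
  obtain c' where c': "(\<Sum>j\<le>m. \<bar>prefix_sum u j - prefix_sum y j - c' * int n\<bar>) \<le> int k"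
    using Suc.IH[OF y(1)] by blast
  obtain i c \<delta> where \<delta>: "\<bar>\<delta>\<bar> \<le> 1"
    and w: "\<forall>j\<le>m. prefix_sum w j = prefix_sum y j + (if j = i then \<delta> else 0) + c * int n"
    using prefix_sum_yoke_adj[OF y(2)] by blast
  have "(\<Sum>j\<le>m. \<bar>prefix_sum u j - prefix_sum w j - (c' - c) * int n\<bar>)
      = (\<Sum>j\<le>m. \<bar>(prefix_sum u j - prefix_sum y j - c' * int n) - (if j = i then \<delta> else 0)\<bar>)"
    by (rule sum.cong) (simp_all add: w algebra_simps)
  also have "\<dots> \<le> (\<Sum>j\<le>m. \<bar>prefix_sum u j - prefix_sum y j - c' * int n\<bar> + (if j = i then \<bar>\<delta>\<bar> else 0))"
    by (rule sum_mono) (simp add: abs_triangle_ineq4)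
  also have "\<dots> \<le> int k + 1" using c' \<delta> by (simp add: sum.distrib)
  finally show ?case by (intro exI[of _ "c' - c"]) simp
qed

lemma yoke_dist_le_walk: "(yoke_adj n m ^^ k) u v \<Longrightarrow> yoke_dist n m u v \<le> enat k"
  unfolding yoke_dist_def by (rule INF_lower) simp

lemma yoke_dist_le_stair_dist:
  assumes "1 \<le> n" "staircase m s" "staircase m t"
  shows "yoke_dist n m (stair_vertex n m s) (stair_vertex n m t) \<le> enat (nat (stair_dist m s t))"
  by (rule yoke_dist_le_walk[OF yoke_walk_stair_dist[OF assms]])

lemma yoke_dist_ge:
  assumes "1 \<le> n" "staircase m s" "staircase m t"
    and F: "\<And>c. int F \<le> (\<Sum>j\<le>m. \<bar>s j - t j - c * int n\<bar>)"
  shows "enat F \<le> yoke_dist n m (stair_vertex n m s) (stair_vertex n m t)"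
  unfolding yoke_dist_def
proof (rule INF_greatest)
  fix k assume "k \<in> {k. (yoke_adj n m ^^ k) (stair_vertex n m s) (stair_vertex n m t)}"
  then obtain c where c:
    "(\<Sum>j\<le>m. \<bar>prefix_sum (stair_vertex n m s) j - prefix_sum (stair_vertex n m t) j - c * int n\<bar>) \<le> int k"
    using yoke_walk_prefix_sum_bound by blast
  define c' where "c' = c + s 0 div int n - t 0 div int n"
  have "(\<Sum>j\<le>m. \<bar>prefix_sum (stair_vertex n m s) j - prefix_sum (stair_vertex n m t) j - c * int n\<bar>)
      = (\<Sum>j\<le>m. \<bar>s j - t j - c' * int n\<bar>)"
    by (rule sum.cong) (simp_all add: prefix_sum_stair_vertex[OF assms(1)] assms(2,3) c'_def algebra_simps)
  then show "enat F \<le> enat k" using c F[of c'] by simp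
qed

section \<open>Walks with unit steps\<close>

definition unit_steps :: "nat \<Rightarrow> (nat \<Rightarrow> int) \<Rightarrow> bool" where
  "unit_steps m d \<longleftrightarrow> (\<forall>j<m. \<bar>d (Suc j) - d j\<bar> \<le> 1)"

lemma unit_steps_uminus: "unit_steps m d \<Longrightarrow> unit_steps m (\<lambda>j. - d j)"
  unfolding unit_steps_def by (simp add: abs_minus_commute)

lemma unit_steps_ivt_forward:
  assumes "unit_steps m d" "i \<le> j" "j \<le> m" "d i \<le> y" "y \<le> d j"
  shows "\<exists>l\<le>m. d l = y"
  using assms(2-5)
proof (induction j)
  case 0
  then show ?case by force
next
  case (Suc j)
  consider "i = Suc j" | "i \<le> j" "y \<le> d j" | "d j < y"
    using Suc.prems by linarith
  then show ?case
  proof cases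
    case 1
    then show ?thesis using Suc.prems by (intro exI[of _ i]) auto
  next
    case 2
    then show ?thesis using Suc by simp
  next
    case 3
    have "\<bar>d (Suc j) - d j\<bar> \<le> 1" using assms(1) Suc.prems by (simp add: unit_steps_def)
    then show ?thesis using 3 Suc.prems by (intro exI[of _ "Suc j"]) auto
  qed
qed

lemma unit_steps_ivt:
  assumes "unit_steps m d" "i \<le> m" "j \<le> m" "d i \<le> y" "y \<le> d j"
  shows "\<exists>l\<le>m. d l = y"
proof (cases "i \<le> j")
  case True
  then show ?thesis using unit_steps_ivt_forward assms by blast
next
  case False
  then obtain l where "l \<le> m" "- d l = - y"
    using unit_steps_ivt_forward[OF unit_steps_uminus[OF assms(1)], of j i "- y"] assms by auto
  then show ?thesis by auto
qed

definition mass_below :: "nat \<Rightarrow> (nat \<Rightarrow> int) \<Rightarrow> int \<Rightarrow> int" where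
  "mass_below m d x = (\<Sum>j\<le>m. max 0 (x - d j))"

definition mass_above :: "nat \<Rightarrow> (nat \<Rightarrow> int) \<Rightarrow> int \<Rightarrow> int" where
  "mass_above m d x = (\<Sum>j\<le>m. max 0 (d j - x))"

definition count_below :: "nat \<Rightarrow> (nat \<Rightarrow> int) \<Rightarrow> int \<Rightarrow> nat" where
  "count_below m d x = card {j. j \<le> m \<and> d j < x}"

definition count_above :: "nat \<Rightarrow> (nat \<Rightarrow> int) \<Rightarrow> int \<Rightarrow> nat" where
  "count_above m d x = card {j. j \<le> m \<and> x < d j}"

lemma mass_below_diff: "mass_below m d x = mass_below m d (x - 1) + int (count_below m d x)"
proof -
  have "mass_below m d x = (\<Sum>j\<le>m. max 0 (x - 1 - d j) + (if d j < x then 1 else 0))"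
    unfolding mass_below_def by (rule sum.cong) auto
  also have "\<dots> = mass_below m d (x - 1) + (\<Sum>j | j \<le> m \<and> d j < x. 1)"
    by (simp add: sum.distrib mass_below_def sum.inter_filter[symmetric] atMost_def)
  finally show ?thesis by (simp add: count_below_def)
qed

text \<open>If the walk reaches level \<open>x\<close>, then by the intermediate value property it visits every
  level between its minimum and \<open>x\<close>, so the counts below \<open>x\<close>, \<open>x - 1\<close>, \<dots> decrease strictly.\<close>

lemma mass_below_le:
  assumes "unit_steps m d" "\<exists>j\<le>m. x \<le> d j"
  shows "2 * mass_below m d x \<le> int (count_below m d x) * (int (count_below m d x) + 1)"
  using assms(2)
proof (induction "count_below m d x" arbitrary: x rule: less_induct)
  case less
  show ?case
  proof (cases "count_below m d x = 0")
    case True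
    then have "\<forall>j\<le>m. max 0 (x - d j) = 0" by (auto simp: count_below_def)
    then show ?thesis using True by (simp add: mass_below_def)
  next
    case False
    then obtain i where i: "i \<le> m" "d i < x"
      unfolding count_below_def by (metis (mono_tags, lifting) card.empty empty_Collect_eq)
    obtain j where j: "j \<le> m" "x \<le> d j" using less.prems by blast
    obtain l where l: "l \<le> m" "d l = x - 1" using unit_steps_ivt[OF assms(1) i(1) j(1), of "x - 1"] i j by auto
    have "{j. j \<le> m \<and> d j < x - 1} \<subset> {j. j \<le> m \<and> d j < x}" using l by force
    then have smaller: "count_below m d (x - 1) < count_below m d x"
      unfolding count_below_def by (intro psubset_card_mono) auto
    then have "2 * mass_below m d (x - 1) \<le> int (count_below m d (x - 1)) * (int (count_below m d (x - 1)) + 1)"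
      using less.hyps[of "x - 1"] j by force
    also have "\<dots> \<le> (int (count_below m d x) - 1) * int (count_below m d x)"
      using smaller by (intro mult_mono) auto
    finally show ?thesis using mass_below_diff[of m d x] by (simp add: algebra_simps)
  qed
qed

lemma mass_above_le:
  assumes "unit_steps m d" "\<exists>j\<le>m. d j \<le> x"
  shows "2 * mass_above m d x \<le> int (count_above m d x) * (int (count_above m d x) + 1)"
proof -
  have "mass_above m d x = mass_below m (\<lambda>j. - d j) (- x)"
    unfolding mass_below_def mass_above_def by (rule sum.cong) auto
  moreover have "count_above m d x = count_below m (\<lambda>j. - d j) (- x)"
    unfolding count_below_def count_above_def by simp
  ultimately show ?thesis
    using mass_below_le[OF unit_steps_uminus[OF assms(1)], of "- x"] assms(2) by force
qed

lemma count_below_pos_iff: "0 < count_below m d x \<longleftrightarrow> (\<exists>j\<le>m. d j < x)"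
  unfolding count_below_def by (subst card_gt_0_iff) auto

lemma count_above_pos_iff: "0 < count_above m d x \<longleftrightarrow> (\<exists>j\<le>m. x < d j)"
  unfolding count_above_def by (subst card_gt_0_iff) auto

lemma count_below_le_iff: "count_below m d x \<le> m \<longleftrightarrow> (\<exists>j\<le>m. x \<le> d j)"
proof
  assume "count_below m d x \<le> m"
  then have "{j. j \<le> m \<and> d j < x} \<noteq> {..m}" by (auto simp: count_below_def)
  then show "\<exists>j\<le>m. x \<le> d j" by (auto simp: not_less)
next
  assume "\<exists>j\<le>m. x \<le> d j"
  then obtain j where "j \<le> m" "x \<le> d j" by blast
  then have "card {j. j \<le> m \<and> d j < x} \<le> card ({..m} - {j})" by (intro card_mono) auto
  then show "count_below m d x \<le> m" using \<open>j \<le> m\<close> by (simp add: count_below_def)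
qed

lemma count_below_above_disjoint:
  "count_below m d x + count_above m d x = card {j. j \<le> m \<and> d j \<noteq> x}"
proof -
  have "{j. j \<le> m \<and> d j \<noteq> x} = {j. j \<le> m \<and> d j < x} \<union> {j. j \<le> m \<and> x < d j}" by auto
  then show ?thesis unfolding count_below_def count_above_def by (simp add: card_Un_disjoint disjoint_iff)
qed

lemma count_below_above_le: "count_below m d x + count_above m d x \<le> m + 1"
proof -
  have "card {j. j \<le> m \<and> d j \<noteq> x} \<le> card {..m}" by (intro card_mono) auto
  then show ?thesis by (simp add: count_below_above_disjoint)
qed

lemma count_below_above_le_if_attained:
  assumes "l \<le> m" "d l = x"
  shows "count_below m d x + count_above m d x \<le> m"
proof -
  have "card {j. j \<le> m \<and> d j \<noteq> x} \<le> card ({..m} - {l})" by (intro card_mono) (use assms in auto)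
  then show ?thesis using assms by (simp add: count_below_above_disjoint)
qed

lemma sum_abs_diff_eq_mass: "(\<Sum>j\<le>m. \<bar>d j - x\<bar>) = mass_below m d x + mass_above m d x"
  unfolding mass_below_def mass_above_def by (subst sum.distrib[symmetric]) (rule sum.cong, auto)

lemma sum_abs_diff_pair_eq_mass:
  assumes "0 \<le> w"
  shows "(\<Sum>j\<le>m. \<bar>d j - x\<bar>) + (\<Sum>j\<le>m. \<bar>d j - (x + w)\<bar>)
    = (int m + 1) * w + 2 * mass_below m d x + 2 * mass_above m d (x + w)"
proof -
  have "(\<Sum>j\<le>m. \<bar>d j - x\<bar>) + (\<Sum>j\<le>m. \<bar>d j - (x + w)\<bar>)
      = (\<Sum>j\<le>m. w + 2 * max 0 (x - d j) + 2 * max 0 (d j - (x + w)))"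
    by (subst sum.distrib[symmetric]) (rule sum.cong, use assms in \<open>auto simp: max_def abs_if\<close>)
  then show ?thesis
    by (simp add: sum.distrib mass_below_def mass_above_def sum_distrib_left[symmetric] algebra_simps)
qed

definition split_cost :: "int \<Rightarrow> int \<Rightarrow> int" where
  "split_cost m p = p * (p + 1) + (m - p) * (m - p + 1)"

lemma split_cost_antimono:
  assumes "l \<le> p" "p \<le> m - l"
  shows "split_cost m p \<le> split_cost m l"
proof -
  have "split_cost m l - split_cost m p = 2 * ((p - l) * (m - l - p))"
    by (simp add: split_cost_def algebra_simps)
  moreover have "0 \<le> (p - l) * (m - l - p)" using assms by simp
  ultimately show ?thesis by linarith
qed

lemma pronic_mono: "0 \<le> p \<Longrightarrow> p \<le> q \<Longrightarrow> p * (p + 1) \<le> q * (q + (1::int))"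
  by (intro mult_mono) auto

lemma sum_abs_diff_le_split_cost:
  assumes "unit_steps m d" "\<exists>i\<le>m. d i \<le> x" "\<exists>j\<le>m. x \<le> d j"
  shows "2 * (\<Sum>j\<le>m. \<bar>d j - x\<bar>) \<le> split_cost (int m) (int (count_below m d x))"
    and "2 * (\<Sum>j\<le>m. \<bar>d j - x\<bar>) \<le> split_cost (int m) (int (count_above m d x))"
proof -
  obtain l where "l \<le> m" "d l = x" using unit_steps_ivt[OF assms(1)] assms(2,3) by blast
  then have c: "count_below m d x + count_above m d x \<le> m"
    by (rule count_below_above_le_if_attained)
  have lo: "2 * mass_below m d x \<le> int (count_below m d x) * (int (count_below m d x) + 1)"
    using mass_below_le assms(1,3) by blast
  have hi: "2 * mass_above m d x \<le> int (count_above m d x) * (int (count_above m d x) + 1)"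
    using mass_above_le assms(1,2) by blast
  have "int (count_above m d x) * (int (count_above m d x) + 1)
      \<le> (int m - int (count_below m d x)) * (int m - int (count_below m d x) + 1)"
    using c by (intro pronic_mono) auto
  then show "2 * (\<Sum>j\<le>m. \<bar>d j - x\<bar>) \<le> split_cost (int m) (int (count_below m d x))"
    using lo hi by (simp add: sum_abs_diff_eq_mass split_cost_def)
  have "int (count_below m d x) * (int (count_below m d x) + 1)
      \<le> (int m - int (count_above m d x)) * (int m - int (count_above m d x) + 1)"
    using c by (intro pronic_mono) auto
  then show "2 * (\<Sum>j\<le>m. \<bar>d j - x\<bar>) \<le> split_cost (int m) (int (count_above m d x))"
    using lo hi by (simp add: sum_abs_diff_eq_mass split_cost_def algebra_simps)
qed

section \<open>The upper bound\<close>

definition yoke_diam_formula :: "nat \<Rightarrow> nat \<Rightarrow> nat" where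
  "yoke_diam_formula n m =
    (if m \<le> n then n * (m + 1) div 2
     else (((m + n) div 2 + 1) choose 2) + (((m - n + 1) div 2 + 1) choose 2)
       + (if even (m - n) \<or> n \<le> (m + 2) div 2 then 0 else n - (m + 2) div 2))"

definition balance_point :: "nat \<Rightarrow> nat \<Rightarrow> nat" where
  "balance_point n m = (if m \<le> n then 0 else (m - n + 1) div 2)"

lemma balance_point_le_half: "1 \<le> n \<Longrightarrow> balance_point n m \<le> m div 2"
  unfolding balance_point_def by (auto intro!: div_le_mono)

lemma double_Suc_choose_two: "2 * int ((x + 1) choose 2) = int x * (int x + 1)"
proof -
  have "2 * ((x + 1) choose 2) = x * (x + 1)" by (simp add: choose_two)
  then show ?thesis by (metis of_nat_mult of_nat_numeral of_nat_Suc Suc_eq_plus1 add.commute)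
qed

lemma yoke_diam_excess_odd:
  fixes n m :: nat
  assumes "n < m" "odd (m - n)"
  shows "(if even (m - n) \<or> n \<le> (m + 2) div 2 then 0 else n - (m + 2) div 2)
    = n div 2 - (m - n + 1) div 2"
proof -
  obtain t where t: "m - n = 2 * t + 1" using assms(2) by (elim oddE)
  then have m: "m = n + 2 * t + 1" using assms(1) by simp
  consider b where "n = 2 * b" | b where "n = 2 * b + 1" by (metis oddE evenE)
  then show ?thesis by cases (use t in \<open>simp_all add: m\<close>)
qed

lemma two_yoke_diam_formula_long:
  fixes n m :: nat
  assumes "n < m"
  defines "L \<equiv> (m - n + 1) div 2"
  shows "2 * int (yoke_diam_formula n m)
    = split_cost (int m) (int L) + 2 * int (if odd (m - n) then n div 2 - L else 0)"
proof -
  have half: "(m + n) div 2 = m - L" using assms by (simp add: L_def)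
  have "L \<le> m" by (simp add: L_def)
  then have "2 * int (((m + n) div 2 + 1) choose 2) + 2 * int ((L + 1) choose 2) = split_cost (int m) (int L)"
    unfolding half double_Suc_choose_two by (simp add: split_cost_def of_nat_diff algebra_simps)
  moreover have "(if even (m - n) \<or> n \<le> (m + 2) div 2 then 0 else n - (m + 2) div 2)
      = (if odd (m - n) then n div 2 - L else 0)"
    using yoke_diam_excess_odd[OF assms(1)] by (auto simp: L_def)
  ultimately show ?thesis using assms(1) by (simp add: yoke_diam_formula_def L_def)
qed

lemma split_cost_le_yoke_diam_formula:
  "split_cost (int m) (int (balance_point n m)) \<le> 2 * int (yoke_diam_formula n m)"
proof (cases "m \<le> n")
  case True
  have "int m * (int m + 1) \<le> (int m + 1) * int n" using True by (simp add: mult.commute mult_right_mono)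
  moreover have "even (m * (m + 1))" by simp
  then obtain q where "m * (m + 1) = 2 * q" by blast
  then have "int m * (int m + 1) = 2 * int q" by (metis of_nat_mult of_nat_numeral of_nat_Suc Suc_eq_plus1 add.commute)
  ultimately have "2 * int q div 2 \<le> (int m + 1) * int n div 2"
    by (metis zdiv_mono1 zero_less_numeral)
  then have "int m * (int m + 1) \<le> 2 * ((int m + 1) * int n div 2)"
    using \<open>int m * (int m + 1) = 2 * int q\<close> by simp
  then show ?thesis using True
    by (simp add: balance_point_def yoke_diam_formula_def split_cost_def zdiv_int algebra_simps)
next
  case False
  then show ?thesis using two_yoke_diam_formula_long[of n m] by (simp add: balance_point_def)
qed

lemma yoke_diam_formula_window:
  fixes n m :: nat
  defines "L \<equiv> int (balance_point n m)"
  shows "(int m + 1) * int n + 2 * ((L - 1) * L) \<le> 2 * int (yoke_diam_formula n m) + 1"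
proof (cases "m \<le> n")
  case True
  then show ?thesis by (simp add: L_def balance_point_def yoke_diam_formula_def zdiv_int algebra_simps)
next
  case False
  define ex where "ex = (if odd (m - n) then n div 2 - (m - n + 1) div 2 else 0)"
  have F: "2 * int (yoke_diam_formula n m) = split_cost (int m) L + 2 * int ex"
    using False two_yoke_diam_formula_long[of n m] by (simp add: L_def balance_point_def ex_def)
  show ?thesis
  proof (cases "even (m - n)")
    case True
    then obtain t where t: "m - n = 2 * t" by (elim evenE)
    then have "int m = int n + 2 * int t" "L = int t" using False by (auto simp: L_def balance_point_def)
    then have "split_cost (int m) L + 1 - ((int m + 1) * int n + 2 * ((L - 1) * L)) = 4 * int t + 1"
      by (simp add: split_cost_def algebra_simps)
    then show ?thesis using F by linarith
  next
    case odd: False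
    then obtain t where t: "m - n = 2 * t + 1" by (elim oddE)
    then have Lt: "(m - n + 1) div 2 = t + 1" by simp
    then have "int m = int n + 2 * int t + 1" "L = int t + 1"
      using False t by (auto simp: L_def balance_point_def)
    then have "split_cost (int m) L + 1 - ((int m + 1) * int n + 2 * ((L - 1) * L)) = 2 * int t + 3 - int n"
      by (simp add: split_cost_def algebra_simps)
    moreover have "ex = n div 2 - (t + 1)" using odd t by (simp add: ex_def Lt)
    then have "int (n div 2) - int t - 1 \<le> int ex"
      by (cases "t + 1 \<le> n div 2") (simp_all add: of_nat_diff)
    moreover have "int n \<le> 2 * int (n div 2) + 1" by linarith
    ultimately show ?thesis using F by linarith
  qed
qed

text \<open>\<open>ga\<close> and \<open>gb\<close> are the costs of two targets \<open>n\<close> apart, with \<open>P\<close> points strictly below the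
  first and \<open>Q\<close> strictly above the second. If neither count reaches the balance point, the
  joint bound \<open>gab\<close> takes over.\<close>

lemma min_le_yoke_diam_formula:
  fixes P Q :: nat and ga gb :: int
  assumes "1 \<le> n" "P \<le> m div 2" "Q \<le> m - m div 2"
    and ga: "P > 0 \<Longrightarrow> 2 * ga \<le> split_cost (int m) (int P)"
    and gb: "Q > 0 \<Longrightarrow> 2 * gb \<le> split_cost (int m) (int Q)"
    and gab: "ga + gb \<le> (int m + 1) * int n + int P * (int P + 1) + int Q * (int Q + 1)"
  shows "min ga gb \<le> int (yoke_diam_formula n m)"
proof -
  define L where "L = balance_point n m"
  have L_le: "L \<le> m div 2" using balance_point_le_half[OF assms(1)] by (simp add: L_def)
  have cost: "split_cost (int m) (int L) \<le> 2 * int (yoke_diam_formula n m)"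
    using split_cost_le_yoke_diam_formula by (simp add: L_def)
  consider "0 < P" "L \<le> P" | "0 < Q" "L \<le> Q" | "P = 0 \<or> P < L" "Q = 0 \<or> Q < L" by linarith
  then show ?thesis
  proof cases
    case 1
    have "split_cost (int m) (int P) \<le> split_cost (int m) (int L)"
      by (rule split_cost_antimono) (use 1 L_le assms(2) in auto)
    then show ?thesis using ga 1 cost by linarith
  next
    case 2
    have "split_cost (int m) (int Q) \<le> split_cost (int m) (int L)"
      by (rule split_cost_antimono) (use 2 L_le assms(3) in auto)
    then show ?thesis using gb 2 cost by linarith
  next
    case 3
    have below: "int x * (int x + 1) \<le> (int L - 1) * int L" if "x = 0 \<or> x < L" for x
      using that pronic_mono[of "int x" "int L - 1"] by (cases "L = 0") auto
    show ?thesis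
      using below[of P] below[of Q] 3 gab yoke_diam_formula_window[where n=n and m=m] by (simp add: L_def)
  qed
qed

lemma int_predicate_crossing:
  fixes f :: "int \<Rightarrow> bool"
  shows "f a \<Longrightarrow> \<not> f (a + int D) \<Longrightarrow> \<exists>k. f k \<and> \<not> f (k + 1)"
proof (induction D arbitrary: a)
  case 0
  then show ?case by simp
next
  case (Suc D)
  then show ?case using Suc.IH[of "a + 1"] by (cases "f (a + 1)") (auto simp: add.assoc)
qed

lemma count_below_crossing_multiple:
  assumes "1 \<le> n" "h \<le> m"
  shows "\<exists>k. count_below m d (k * int n) \<le> h \<and> h < count_below m d ((k + 1) * int n)"
proof -
  define B where "B = (\<Sum>j\<le>m. \<bar>d j\<bar>)"
  have dB: "\<bar>d j\<bar> \<le> B" if "j \<le> m" for j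
    unfolding B_def by (rule member_le_sum) (use that in auto)
  have "0 \<le> B" unfolding B_def by (simp add: sum_nonneg)
  then have low: "- B * int n \<le> - B" and high: "B + 1 \<le> (B + 1) * int n"
    using assms(1) by (simp_all add: mult_le_cancel_left1)
  have "- B * int n \<le> d j" "d j < (B + 1) * int n" if "j \<le> m" for j
    using abs_le_D1[OF dB[OF that]] abs_le_D2[OF dB[OF that]] low high by linarith+
  then have e1: "{j. j \<le> m \<and> d j < - B * int n} = {}"
    and e2: "{j. j \<le> m \<and> d j < (- B + int (nat (2 * B + 1))) * int n} = {..m}"
    using \<open>0 \<le> B\<close> by (auto simp: not_less)
  have "count_below m d (- B * int n) \<le> h"
    and "\<not> count_below m d ((- B + int (nat (2 * B + 1))) * int n) \<le> h"
    using assms(2) unfolding count_below_def e1 e2 by simp_all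
  then show ?thesis
    using int_predicate_crossing[of "\<lambda>k. count_below m d (k * int n) \<le> h"] by (meson not_le)
qed

text \<open>The multiple is chosen where the number of points strictly below it crosses \<open>m div 2\<close>.\<close>

lemma unit_steps_near_multiple:
  assumes "1 \<le> n" "unit_steps m d"
  shows "\<exists>k. (\<Sum>j\<le>m. \<bar>d j - k * int n\<bar>) \<le> int (yoke_diam_formula n m)"
proof -
  obtain k where k: "count_below m d (k * int n) \<le> m div 2" "m div 2 < count_below m d ((k + 1) * int n)"
    using count_below_crossing_multiple[OF assms(1), of "m div 2" m d] by auto
  define a where "a = k * int n"
  have b: "(k + 1) * int n = a + int n" by (simp add: a_def algebra_simps)
  define P where "P = count_below m d a"
  define Q where "Q = count_above m d (a + int n)"
  have P: "P \<le> m div 2" using k by (simp add: P_def a_def)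
  have Q: "Q \<le> m - m div 2" using k b count_below_above_le[of m d "a + int n"] by (simp add: Q_def)
  have "P \<le> m" using P by simp
  then have above_a: "\<exists>j\<le>m. a \<le> d j" using count_below_le_iff[of m d a] by (simp add: P_def)
  have "\<exists>j\<le>m. d j < a + int n" using k(2) b count_below_pos_iff[of m d "a + int n"] by simp
  then have below_b: "\<exists>j\<le>m. d j \<le> a + int n" by force
  define ga where "ga = (\<Sum>j\<le>m. \<bar>d j - a\<bar>)"
  define gb where "gb = (\<Sum>j\<le>m. \<bar>d j - (a + int n)\<bar>)"
  have gab: "ga + gb \<le> (int m + 1) * int n + int P * (int P + 1) + int Q * (int Q + 1)"
    using sum_abs_diff_pair_eq_mass[where w="int n" and m=m and d=d and x=a]
      mass_below_le[OF assms(2) above_a] mass_above_le[OF assms(2) below_b]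
    by (simp add: ga_def gb_def P_def Q_def)
  have ga: "2 * ga \<le> split_cost (int m) (int P)" if "P > 0"
  proof -
    have "\<exists>i\<le>m. d i \<le> a" using that count_below_pos_iff[of m d a] by (force simp: P_def)
    then show ?thesis
      using sum_abs_diff_le_split_cost(1)[OF assms(2) _ above_a] by (simp add: ga_def P_def)
  qed
  have gb: "2 * gb \<le> split_cost (int m) (int Q)" if "Q > 0"
  proof -
    have "\<exists>j\<le>m. a + int n \<le> d j" using that count_above_pos_iff[of m d "a + int n"] by (force simp: Q_def)
    then show ?thesis
      using sum_abs_diff_le_split_cost(2)[OF assms(2) below_b] by (simp add: gb_def Q_def)
  qed
  have "min ga gb \<le> int (yoke_diam_formula n m)"
    by (rule min_le_yoke_diam_formula[OF assms(1) P Q ga gb gab])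
  then consider "ga \<le> int (yoke_diam_formula n m)" | "gb \<le> int (yoke_diam_formula n m)"
    by linarith
  then show ?thesis
  proof cases
    case 1
    then show ?thesis by (auto simp: ga_def a_def)
  next
    case 2
    then show ?thesis unfolding gb_def b[symmetric] by blast
  qed
qed

section \<open>The lower bound\<close>

definition line_cost :: "nat \<Rightarrow> int \<Rightarrow> int" where
  "line_cost m y = (\<Sum>j\<le>m. \<bar>int j - y\<bar>)"

lemma line_cost_diff:
  "line_cost m y - line_cost m (y + 1) = int m + 1 - 2 * int (card {j. j \<le> m \<and> int j \<le> y})"
proof -
  have "line_cost m y - line_cost m (y + 1) = (\<Sum>j\<le>m. 1 - 2 * (if int j \<le> y then 1 else 0))"
    unfolding line_cost_def by (subst sum_subtractf[symmetric]) (rule sum.cong, auto)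
  also have "\<dots> = int m + 1 - 2 * (\<Sum>j | j \<le> m \<and> int j \<le> y. 1)"
    by (simp add: sum_subtractf sum_distrib_left[symmetric] sum.inter_filter[symmetric] atMost_def)
  finally show ?thesis by simp
qed

lemma line_cost_Suc: "line_cost (Suc m) y = line_cost m y + \<bar>int (Suc m) - y\<bar>"
  by (simp add: line_cost_def)

lemma line_cost_sym: "line_cost m (int m - y) = line_cost m y"
  unfolding line_cost_def by (rule sum.reindex_bij_witness[of _ "\<lambda>j. m - j" "\<lambda>j. m - j"]) auto

lemma line_cost_antimono:
  assumes "y \<le> z" "2 * z \<le> int m"
  shows "line_cost m z \<le> line_cost m y"
  using assms
proof (induction z rule: int_ge_induct)
  case base
  then show ?case by simp
next
  case (step z)
  have "{j. j \<le> m \<and> int j \<le> z} \<subseteq> {..<nat (z + 1)}" by auto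
  then have "card {j. j \<le> m \<and> int j \<le> z} \<le> nat (z + 1)"
    using card_mono[of "{..<nat (z + 1)}"] by fastforce
  then have "2 * int (card {j. j \<le> m \<and> int j \<le> z}) \<le> int m"
    using step.prems by (cases "0 \<le> z + 1") auto
  moreover have "line_cost m z \<le> line_cost m y" using step by simp
  ultimately show ?case using line_cost_diff[of m z] by linarith
qed

lemma line_cost_mono: "int m \<le> 2 * y \<Longrightarrow> y \<le> z \<Longrightarrow> line_cost m y \<le> line_cost m z"
  using line_cost_antimono[of "int m - z" "int m - y" m] line_cost_sym[of m y] line_cost_sym[of m z]
  by simp

lemma two_line_cost_nonpos:
  assumes "y \<le> 0"
  shows "2 * line_cost m y = int m * (int m + 1) - 2 * (int m + 1) * y"
proof -
  have "line_cost m y = (\<Sum>j\<le>m. int j) - (\<Sum>j\<le>m. y)"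
    unfolding line_cost_def by (subst sum_subtractf[symmetric]) (rule sum.cong, use assms in auto)
  moreover have "2 * (\<Sum>j\<le>m. int j) = int m * (int m + 1)"
    using double_gauss_sum[of m, where 'a=int] by (simp add: atMost_atLeast0)
  ultimately show ?thesis by (simp add: algebra_simps)
qed

lemma two_line_cost:
  assumes "0 \<le> y" "y \<le> int m"
  shows "2 * line_cost m y = split_cost (int m) y"
  using assms
proof (induction y rule: int_ge_induct)
  case base
  then show ?case using two_line_cost_nonpos[of 0 m] by (simp add: split_cost_def)
next
  case (step y)
  have "{j. j \<le> m \<and> int j \<le> y} = {..nat y}" using step by auto
  then have "line_cost m y - line_cost m (y + 1) = int m + 1 - 2 * (y + 1)"
    using line_cost_diff[of m y] step by simp
  then show ?case using step by (simp add: split_cost_def algebra_simps)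
qed

text \<open>\<open>y\<close> and \<open>y + n\<close> lie on either side of the median \<open>m / 2\<close>, where \<open>line_cost\<close> is minimal.\<close>

lemma line_cost_multiple_ge:
  assumes "1 \<le> n" "2 * y \<le> int m" "int m \<le> 2 * (y + int n)"
  shows "min (line_cost m y) (line_cost m (y + int n)) \<le> line_cost m (y + k * int n)"
proof (cases "k \<le> 0")
  case True
  then have "k * int n \<le> 0" by (simp add: mult_nonpos_nonneg)
  then show ?thesis using line_cost_antimono[of "y + k * int n" y m] assms by linarith
next
  case False
  then have "int n \<le> k * int n" using assms by (simp add: mult_le_cancel_right1)
  then show ?thesis using line_cost_mono[of m "y + int n" "y + k * int n"] assms by linarith
qed

lemma staircase_line: "staircase m (\<lambda>j. int j - y)"
  by (simp add: staircase_def)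

lemma line_far_from_multiples:
  assumes "1 \<le> n" "2 * y \<le> int m" "int m \<le> 2 * (y + int n)"
    and "F \<le> line_cost m y" "F \<le> line_cost m (y + int n)"
  shows "F \<le> (\<Sum>j\<le>m. \<bar>(int j - y) - c * int n\<bar>)"
proof -
  have "(\<Sum>j\<le>m. \<bar>(int j - y) - c * int n\<bar>) = line_cost m (y + c * int n)"
    unfolding line_cost_def by (rule sum.cong) (auto simp: algebra_simps)
  then show ?thesis using line_cost_multiple_ge[OF assms(1-3), of c] assms(4,5) by linarith
qed

text \<open>When \<open>m - n\<close> is odd, no straight line is optimal; instead the line is flattened at the
  middle position \<open>p\<close>, which keeps every multiple of \<open>n\<close> at distance at least \<open>n div 2\<close>
  from the flat step.\<close>

definition step_line :: "nat \<Rightarrow> int \<Rightarrow> nat \<Rightarrow> int" where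
  "step_line p y j = int j - (if p \<le> j then 1 else 0) - y"

lemma staircase_step_line: "staircase m (step_line p y)"
  by (auto simp: staircase_def step_line_def)

lemma sum_abs_step_line:
  assumes "1 \<le> p" "p \<le> m"
  shows "(\<Sum>j\<le>m. \<bar>step_line p y j\<bar>) = line_cost (m - 1) y + \<bar>int p - 1 - y\<bar>"
  using assms(2)
proof (induction m rule: dec_induct)
  case base
  have "(\<Sum>j<p. \<bar>step_line p y j\<bar>) = line_cost (p - 1) y"
    unfolding line_cost_def using assms(1)
    by (simp add: step_line_def lessThan_Suc_atMost[symmetric])
  then show ?case by (simp add: lessThan_Suc_atMost[symmetric] step_line_def)
next
  case (step m)
  then obtain q where "m = Suc q" using assms(1) by (cases m) auto
  then show ?case using step by (simp add: step_line_def line_cost_Suc)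
qed

lemma step_line_far_from_multiples:
  assumes "1 \<le> n" "1 \<le> m" "int m - 1 - int n = 2 * y"
  shows "line_cost (m - 1) y + int (n div 2) \<le> (\<Sum>j\<le>m. \<bar>step_line ((m + 1) div 2) (y + c * int n) j\<bar>)"
proof -
  define p where "p = (m + 1) div 2"
  have p: "1 \<le> p" "p \<le> m" using assms(2) by (auto simp: p_def)
  have "odd (int m - int n)" using assms(3) by presburger
  then have p_y: "int p - 1 - y = int (n div 2)" using assms(3) by (simp add: p_def)
  have "line_cost (m - 1) y \<le> line_cost (m - 1) (y + c * int n)"
    using line_cost_multiple_ge[OF assms(1), of y "m - 1" c] line_cost_sym[of "m - 1" y] assms
    by (simp add: of_nat_diff algebra_simps)
  moreover have "int (n div 2) \<le> \<bar>int p - 1 - (y + c * int n)\<bar>"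
  proof (cases "c \<le> 0")
    case True
    then have "c * int n \<le> 0" by (simp add: mult_nonpos_nonneg)
    then show ?thesis using p_y by linarith
  next
    case False
    then have "int n \<le> c * int n" using assms(1) by (simp add: mult_le_cancel_right1)
    then show ?thesis using p_y by linarith
  qed
  ultimately show ?thesis using sum_abs_step_line[OF p, of "y + c * int n"] by (simp add: p_def)
qed

lemma yoke_diam_formula_le_line_cost:
  assumes "int m - int n = 2 * y"
  shows "int (yoke_diam_formula n m) \<le> line_cost m y"
proof (cases "m \<le> n")
  case True
  then have "y \<le> 0" using assms by simp
  then have "2 * line_cost m y = (int m + 1) * int n"
    using two_line_cost_nonpos[of y m] assms by (simp add: algebra_simps)
  moreover have "2 * ((int m + 1) * int n div 2) \<le> (int m + 1) * int n" by simp
  ultimately show ?thesis using True by (simp add: yoke_diam_formula_def zdiv_int algebra_simps)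
next
  case False
  then have "int (m - n) = 2 * y" using assms by (simp add: of_nat_diff)
  then have "even (m - n)" "int ((m - n + 1) div 2) = y" by presburger+
  then have "2 * int (yoke_diam_formula n m) = split_cost (int m) y"
    using False two_yoke_diam_formula_long[of n m] assms by simp
  moreover have "2 * line_cost m y = split_cost (int m) y"
    using False assms by (intro two_line_cost) auto
  ultimately show ?thesis by simp
qed

lemma yoke_diam_formula_le_line_cost_balanced:
  assumes "n < m" "odd (m - n)" "n div 2 \<le> (m - n + 1) div 2"
  shows "int (yoke_diam_formula n m) \<le> line_cost m (int ((m - n + 1) div 2))"
proof -
  have "2 * int (yoke_diam_formula n m) = split_cost (int m) (int ((m - n + 1) div 2))"
    using assms two_yoke_diam_formula_long[of n m] by simp
  moreover have "2 * line_cost m (int ((m - n + 1) div 2)) = split_cost (int m) (int ((m - n + 1) div 2))"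
    by (rule two_line_cost) auto
  ultimately show ?thesis by simp
qed

lemma yoke_diam_formula_le_step_cost:
  assumes "1 \<le> m" "int m - 1 - int n = 2 * y" "m \<le> n \<or> (m - n + 1) div 2 < n div 2"
  shows "int (yoke_diam_formula n m) \<le> line_cost (m - 1) y + int (n div 2)"
proof (cases "m \<le> n")
  case True
  then have "y \<le> 0" using assms by simp
  then have "2 * line_cost (m - 1) y = int m * int n"
    using two_line_cost_nonpos[of y "m - 1"] assms by (simp add: of_nat_diff algebra_simps)
  moreover have "odd (int m - int n)" using assms(2) by presburger
  then have "2 * ((int m + 1) * int n div 2) \<le> int m * int n + 2 * int (n div 2)"
    by (cases "even n") (auto elim!: evenE oddE simp: algebra_simps)
  ultimately show ?thesis using True by (simp add: yoke_diam_formula_def zdiv_int algebra_simps)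
next
  case False
  define L where "L = (m - n + 1) div 2"
  have "odd (m - n)" "2 * int L = int m - int n + 1" using False assms(2) by (simp_all add: L_def) presburger+
  then have "2 * int (yoke_diam_formula n m) = split_cost (int m) (int L) + 2 * (int (n div 2) - int L)"
    using False assms(3) two_yoke_diam_formula_long[of n m] by (simp add: L_def of_nat_diff)
  moreover have y: "y = int L - 1" using assms(2) \<open>2 * int L = _\<close> by simp
  have "2 * line_cost (m - 1) y = split_cost (int m - 1) (int L - 1)"
    using two_line_cost[of "int L - 1" "m - 1"] False \<open>2 * int L = _\<close> unfolding y by (simp add: of_nat_diff)
  ultimately have "2 * int (yoke_diam_formula n m) = 2 * line_cost (m - 1) y + 2 * int (n div 2)"
    by (simp add: split_cost_def algebra_simps)
  then show ?thesis by linarith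
qed

text \<open>A line centred between two consecutive multiples of \<open>n\<close> is extremal when \<open>m - n\<close> is even
  or the balance point reaches \<open>n div 2\<close>; otherwise the line with a flat middle step is.\<close>

lemma exists_staircase_far_from_multiples:
  assumes "1 \<le> n"
  shows "\<exists>s. staircase m s \<and> (\<forall>c. int (yoke_diam_formula n m) \<le> (\<Sum>j\<le>m. \<bar>s j - c * int n\<bar>))"
proof (cases "even (int m - int n)")
  case True
  then obtain y where y: "int m - int n = 2 * y" by (elim evenE)
  have "line_cost m (y + int n) = line_cost m y" using line_cost_sym[of m y] y by (simp add: algebra_simps)
  then show ?thesis
    using line_far_from_multiples[OF assms] yoke_diam_formula_le_line_cost[OF y] y staircase_line
    by (intro exI[of _ "\<lambda>j. int j - y"]) auto
next
  case odd: False
  consider (zero) "m = 0" | (balanced) "n < m" "n div 2 \<le> (m - n + 1) div 2"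
    | (step) "1 \<le> m" "m \<le> n \<or> (m - n + 1) div 2 < n div 2" by linarith
  then show ?thesis
  proof cases
    case zero
    have F: "int (yoke_diam_formula n m) = int (n div 2)" using zero by (simp add: yoke_diam_formula_def)
    have "int (n div 2) \<le> (\<Sum>j\<le>m. \<bar>(int j - (- int (n div 2))) - c * int n\<bar>)" for c
      by (rule line_far_from_multiples[OF assms]) (use zero in \<open>auto simp: line_cost_def\<close>)
    moreover have "staircase m (\<lambda>j. int j - (- int (n div 2)))" by (rule staircase_line)
    ultimately show ?thesis using F by (intro exI[of _ "\<lambda>j. int j - (- int (n div 2))"]) simp
  next
    case balanced
    define L where "L = int ((m - n + 1) div 2)"
    have "odd (m - n)" "2 * L = int m - int n + 1" using balanced odd by (simp_all add: L_def) presburger+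
    then have "int (yoke_diam_formula n m) \<le> line_cost m L" "line_cost m L \<le> line_cost m (L + int n)"
      using yoke_diam_formula_le_line_cost_balanced[OF balanced(1) _ balanced(2)]
        line_cost_mono[of m "int m - L" "L + int n"] line_cost_sym[of m L] assms
      by (simp_all add: L_def)
    then show ?thesis
      using line_far_from_multiples[OF assms, of L m] \<open>2 * L = _\<close> assms staircase_line
      by (intro exI[of _ "\<lambda>j. int j - L"]) auto
  next
    case step
    have "even (int m - 1 - int n)" using odd by presburger
    then obtain y where y: "int m - 1 - int n = 2 * y" by (elim evenE)
    have "(\<Sum>j\<le>m. \<bar>step_line ((m + 1) div 2) y j - c * int n\<bar>)
        = (\<Sum>j\<le>m. \<bar>step_line ((m + 1) div 2) (y + c * int n) j\<bar>)" for c
      by (simp add: step_line_def algebra_simps)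
    then show ?thesis
      using step_line_far_from_multiples[OF assms step(1) y] yoke_diam_formula_le_step_cost[OF step(1) y step(2)]
        staircase_step_line
      by (intro exI[of _ "step_line ((m + 1) div 2) y"]) (auto intro: order_trans)
  qed
qed

lemma yoke_dist_le_formula:
  assumes "1 \<le> n" "yoke_vert n m u" "yoke_vert n m v"
  shows "yoke_dist n m u v \<le> enat (yoke_diam_formula n m)"
proof -
  define d where "d j = prefix_sum u j - prefix_sum v j" for j
  have "unit_steps m d" unfolding unit_steps_def
  proof (intro allI impI)
    fix j assume "j < m"
    then have "u ! Suc j \<le> 1" "v ! Suc j \<le> 1" using assms(2,3) by (auto simp: yoke_vert_def)
    then show "\<bar>d (Suc j) - d j\<bar> \<le> 1" by (simp add: d_def prefix_sum_Suc)
  qed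
  then obtain k where k: "(\<Sum>j\<le>m. \<bar>d j - k * int n\<bar>) \<le> int (yoke_diam_formula n m)"
    using unit_steps_near_multiple[OF assms(1)] by blast
  define t where "t j = prefix_sum v j + k * int n" for j
  have t: "staircase m t" using staircase_prefix_sum[OF assms(3)] by (simp add: staircase_def t_def)
  have "stair_vertex n m t = v"
    using stair_vertex_shift[of m t "prefix_sum v" k n] stair_vertex_prefix_sum[OF assms(3)] by (simp add: t_def)
  then have "yoke_dist n m u v \<le> enat (nat (stair_dist m (prefix_sum u) t))"
    using yoke_dist_le_stair_dist[OF assms(1) staircase_prefix_sum[OF assms(2)] t]
      stair_vertex_prefix_sum[OF assms(2)] by simp
  also have "stair_dist m (prefix_sum u) t = (\<Sum>j\<le>m. \<bar>d j - k * int n\<bar>)"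
    unfolding stair_dist_def by (rule sum.cong) (auto simp: d_def t_def algebra_simps)
  also have "enat (nat \<dots>) \<le> enat (yoke_diam_formula n m)" using k by simp
  finally show ?thesis .
qed

lemma yoke_diam_eq_formula:
  assumes "1 \<le> n"
  shows "yoke_diam n m = enat (yoke_diam_formula n m)"
proof (rule antisym)
  show "yoke_diam n m \<le> enat (yoke_diam_formula n m)"
    unfolding yoke_diam_def by (intro SUP_least) (auto intro: yoke_dist_le_formula[OF assms])
next
  obtain s where s: "staircase m s" "\<forall>c. int (yoke_diam_formula n m) \<le> (\<Sum>j\<le>m. \<bar>s j - c * int n\<bar>)"
    using exists_staircase_far_from_multiples[OF assms] by blast
  have zero: "staircase m (\<lambda>j. 0)" by (simp add: staircase_def)
  have "enat (yoke_diam_formula n m) \<le> yoke_dist n m (stair_vertex n m s) (stair_vertex n m (\<lambda>j. 0))"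
    by (rule yoke_dist_ge[OF assms s(1) zero]) (use s(2) in simp)
  moreover have "yoke_vert n m (stair_vertex n m s)" "yoke_vert n m (stair_vertex n m (\<lambda>j. 0))"
    using yoke_vert_stair_vertex[OF assms] s(1) zero by auto
  ultimately show "enat (yoke_diam_formula n m) \<le> yoke_diam n m"
    unfolding yoke_diam_def
    by (intro SUP_upper2[of "stair_vertex n m s"] SUP_upper2[of "stair_vertex n m (\<lambda>j. 0)"]) auto
qed

lemma yoke_diam_formula_diagonal:
  "yoke_diam_formula n n = (((n + n) div 2 + 1) choose 2) + (((n - n + 1) div 2 + 1) choose 2)"
  by (simp add: yoke_diam_formula_def choose_two algebra_simps)

lemma yoke_diam_formula_one:
  assumes "1 \<le> m"
  shows "yoke_diam_formula 1 m = (((m + 1) div 2 + 1) choose 2) + ((m div 2 + 1) choose 2)"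
proof (cases "m = 1")
  case True
  then show ?thesis by (simp add: yoke_diam_formula_def choose_two)
next
  case False
  then show ?thesis using assms by (simp add: yoke_diam_formula_def)
qed

theorem theorem2p3:
  fixes n m :: nat
  assumes "n \<ge> 1"
  shows "(m \<le> n \<longrightarrow> yoke_diam n m = enat (n * (m + 1) div 2))
    \<and> (1 = n \<and> n \<le> m \<longrightarrow>
         yoke_diam n m = enat ((((m + 1) div 2 + 1) choose 2) + ((m div 2 + 1) choose 2)))
    \<and> (1 < n \<and> n \<le> m \<longrightarrow>
         ((even (m - n) \<or> n \<le> (m + 2) div 2) \<longrightarrow>
            yoke_diam n m = enat ((((m + n) div 2 + 1) choose 2) + (((m - n + 1) div 2 + 1) choose 2)))
       \<and> (\<not> (even (m - n) \<or> n \<le> (m + 2) div 2) \<longrightarrow>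
            yoke_diam n m = enat ((((m + n) div 2 + 1) choose 2) + (((m - n + 1) div 2 + 1) choose 2)
                                   + (n - (m + 2) div 2))))"
proof -
  note diam = yoke_diam_eq_formula[OF assms]
  show ?thesis
  proof (intro conjI impI)
    assume "m \<le> n"
    then show "yoke_diam n m = enat (n * (m + 1) div 2)" by (simp add: diam yoke_diam_formula_def)
  next
    assume "1 = n \<and> n \<le> m"
    then show "yoke_diam n m = enat ((((m + 1) div 2 + 1) choose 2) + ((m div 2 + 1) choose 2))"
      using diam yoke_diam_formula_one by auto
  next
    assume "1 < n \<and> n \<le> m"
    moreover assume "even (m - n) \<or> n \<le> (m + 2) div 2"
    ultimately show "yoke_diam n m = enat ((((m + n) div 2 + 1) choose 2) + (((m - n + 1) div 2 + 1) choose 2))"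
      using diam yoke_diam_formula_diagonal
      by (cases "m = n") (simp_all add: yoke_diam_formula_def[of n m])
  next
    assume "1 < n \<and> n \<le> m"
    moreover assume "\<not> (even (m - n) \<or> n \<le> (m + 2) div 2)"
    then have "\<not> m \<le> n" by auto
    ultimately show "yoke_diam n m = enat ((((m + n) div 2 + 1) choose 2) + (((m - n + 1) div 2 + 1) choose 2)
        + (n - (m + 2) div 2))"
      using \<open>\<not> (even (m - n) \<or> _)\<close> by (simp add: diam yoke_diam_formula_def)
  qed
qed

end
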